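(* For all $\vec v\in\hat N^n,\vec w\in\hat N^m$ with $n,m\ge1$, writing $\vec v=\vec v_l\vee\vec v_r$ and $\vec w=\vec w_l\vee\vec w_r$, the set $I=\{\vec u\in\hat N^{n+m}:\vec v\nearrow\vec w\le\vec u\le\vec v\nwarrow\vec w\}$ is the disjoint union of $I_1=\{\vec u:\ \vec v_l\vee(\vec v_r\nearrow\vec w)\le\vec u\le\vec v\nwarrow\vec w\}$ and $I_2=\{\vec u:\ \vec v\nearrow\vec w\le\vec u\le(\vec v\nwarrow\vec w_l)\vee\vec w_r\}$. Equivalently, $\vec v\star\vec w=\vec v_l\vee(\vec v_r\star\vec w)+(\vec v\star\vec w_l)\vee\vec w_r$, where $\vee$ is extended bilinearly, and $I_1$ (resp. $I_2$) is the set of trees appearing in the first (resp. second) summand.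
   Context: $\hat N^0=\{()\}$ (empty vector) and, for $n\ge1$, $\hat N^n$ is the set of names of planar rooted binary trees with $n$ internal vertices; every element of $\hat N^n$, $n\ge1$, is uniquely $\vec v_l\vee\vec v_r:=(\vec v_l,1,p+1+\vec v_r)$ with $\vec v_l\in\hat N^p,\vec v_r\in\hat N^q$, $p+q+1=n$, where $k+(w_1,\dots,w_q)=(w_1+k,\dots,w_q+k)$ (so $\vec v\vee()=(\vec v,1)$, $()\vee\vec v=(1,1+\vec v)$, $()\vee()=(1)$). For $\vec v\in\hat N^n,\vec w\in\hat N^m$: $\vec v\nearrow\vec w=(\vec v,n\triangleright w_1,\dots,n\triangleright w_m)$ with $n\triangleright a=a+n$ for $a\neq1$, $n\triangleright1=1$; $\vec v\nwarrow\vec w=(\vec v,n+\vec w)$; $()$ is a unit for both. Componentwise order $\le$. On $K\hat N^\infty_*=\bigoplus_{n\ge1}K\hat N^n$ ($K$ a field of characteristic zero), $\vec v\star\vec w$ is the sum of all $\vec t\in\hat N^{n+m}$ with $\vec v\nearrow\vec w\le\vec t\le\vec v\nwarrow\vec w$, and $()\star\vec v=\vec v\star()=\vec v$. *)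

theory Defs
  imports Main
begin

datatype bintree = Lf | Nd bintree bintree

fun internal :: "bintree \<Rightarrow> nat" where
  "internal Lf = 0"
| "internal (Nd l r) = internal l + internal r + 1"

definition vee :: "nat list \<Rightarrow> nat list \<Rightarrow> nat list" where
  "vee vl vr = vl @ [1] @ map (\<lambda>a. a + (length vl + 1)) vr"

fun tname :: "bintree \<Rightarrow> nat list" where
  "tname Lf = []"
| "tname (Nd l r) = vee (tname l) (tname r)"

definition Nhat :: "nat \<Rightarrow> nat list set" where
  "Nhat n = {tname t | t. internal t = n}"

definition over :: "nat list \<Rightarrow> nat list \<Rightarrow> nat list" where
  "over v w = v @ map (\<lambda>a. if a = 1 then 1 else a + length v) w"

definition under :: "nat list \<Rightarrow> nat list \<Rightarrow> nat list" where
  "under v w = v @ map (\<lambda>a. a + length v) w"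

definition vle :: "nat list \<Rightarrow> nat list \<Rightarrow> bool" where
  "vle u v \<longleftrightarrow> length u = length v \<and> (\<forall>i < length u. u ! i \<le> v ! i)"

end

theory Submission
  imports Defs
begin

text \<open>
  Positions are 0-based; let n = length v, p = length vl and r = n + length wl, so that p and r are
  the positions of the roots of v and of w in the bounds. The bounds over v w and under v w both
  have entry 1 at p, and entries 1 and n + 1 at r. The bound vee vl (over vr w) is over v w with
  every entry 1 coming from w raised to p + 2, and vee (under v wl) wr is under v w with entry r
  lowered to 1. Let u be a tree name between over v w and under v w. If u ! r = 1, then u lies below
  vee (under v wl) wr. Otherwise the nesting of tree names forces u ! r > p + 1 (as u ! p = 1), and
  likewise u ! i > p + 1 at each position i \<ge> n where over v w has entry 1: such i are at most r,
  and u ! i \<le> p + 1 would give u ! i = 1 and then, since u ! r \<le> n + 1 \<le> i + 1, also u ! r = 1.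
  So u lies above vee vl (over vr w). The two parts are disjoint because this lower bound exceeds
  the upper bound vee (under v wl) wr at r.
\<close>

lemma length_vee [simp]: "length (vee a b) = length a + length b + 1"
  by (simp add: vee_def)

lemma nth_vee:
  "i < length (vee a b) \<Longrightarrow> vee a b ! i =
    (if i < length a then a ! i else if i = length a then 1 else b ! (i - length a - 1) + (length a + 1))"
  by (auto simp: vee_def nth_append nth_Cons')

lemma length_over [simp]: "length (over v w) = length v + length w"
  by (simp add: over_def)

text \<open>
  A necessary condition on tree names, and all the argument needs. Read as a 1-based position, the
  entry of a vertex is the first vertex of the block formed by its left subtree and itself, and
  every vertex of that block has an entry at least as large.
\<close>
definition nested :: "nat list \<Rightarrow> bool" where
  "nested u \<longleftrightarrow> (\<forall>i<length u. 1 \<le> u ! i \<and> (\<forall>j<i. u ! i \<le> Suc j \<longrightarrow> u ! i \<le> u ! j))"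

lemma nested_Nil: "nested []"
  by (simp add: nested_def)

lemma nested_vee:
  assumes a: "nested a" and b: "nested b"
  shows "nested (vee a b)"
  unfolding nested_def
proof (intro allI impI conjI)
  fix i assume i: "i < length (vee a b)"
  then show "1 \<le> vee a b ! i"
    using a b by (auto simp: nth_vee nested_def)
  fix j assume "j < i" and le: "vee a b ! i \<le> Suc j"
  consider "i \<le> length a" | "j \<le> length a" "length a < i" | "length a < j"
    by linarith
  then show "vee a b ! i \<le> vee a b ! j"
  proof cases
    case 1
    then show ?thesis using i \<open>j < i\<close> le a by (auto simp: nth_vee nested_def)
  next
    case 2
    then have "1 \<le> b ! (i - length a - 1)"
      using i b by (auto simp: nested_def)
    then show ?thesis using 2 i le by (simp add: nth_vee)
  next
    case 3
    then show ?thesis using i \<open>j < i\<close> le b by (auto simp: nth_vee nested_def)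
  qed
qed

lemma nested_tname: "nested (tname t)"
  by (induction t) (simp_all add: nested_Nil nested_vee)

lemma length_tname: "length (tname t) = internal t"
  by (induction t) simp_all

lemma Nhat_D:
  assumes "u \<in> Nhat k"
  shows "length u = k" and "nested u"
  using assms length_tname nested_tname by (auto simp: Nhat_def)

lemma nested_eq_one:
  assumes "nested u" "j < i" "i < length u" "u ! j = 1" "u ! i \<le> Suc j"
  shows "u ! i = 1"
  using assms unfolding nested_def by (metis le_antisym)

lemma nth_vee_eq_one:
  assumes "nested b" "i < length (vee a b)" "vee a b ! i = 1"
  shows "i \<le> length a"
proof (rule ccontr)
  assume "\<not> i \<le> length a"
  moreover from this have "1 \<le> b ! (i - length a - 1)"
    using assms(1,2) by (auto simp: nested_def)
  ultimately show False
    using assms(2,3) by (simp add: nth_vee)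
qed

lemma vle_nth: "vle u v \<Longrightarrow> i < length u \<Longrightarrow> u ! i \<le> v ! i"
  by (simp add: vle_def)

lemma vle_trans: "vle a b \<Longrightarrow> vle b c \<Longrightarrow> vle a c"
  unfolding vle_def by (metis le_trans)

lemma vle_append_map:
  "(\<And>a. f a \<le> g a) \<Longrightarrow> vle (xs @ map f ys) (xs @ map g ys)"
  by (auto simp: vle_def nth_append)

lemma vle_list_update_left: "vle xs ys \<Longrightarrow> a \<le> ys ! i \<Longrightarrow> vle (xs[i := a]) ys"
  by (cases "i < length ys") (auto simp: vle_def nth_list_update)

lemma vle_list_update_right: "vle xs ys \<Longrightarrow> xs ! i \<le> a \<Longrightarrow> vle xs (ys[i := a])"
  by (cases "i < length ys") (auto simp: vle_def nth_list_update)

lemma vee_over_eq: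
  "vee vl (over vr w) = vee vl vr @ map (\<lambda>a. if a = 1 then length vl + 2 else a + length (vee vl vr)) w"
  by (simp add: vee_def over_def cong: if_cong)

lemma vee_under_eq:
  "vee (under v wl) wr = (under v (vee wl wr))[length v + length wl := 1]"
  by (simp add: vee_def under_def list_update_append)

lemma over_vle_vee_over: "vle (over (vee vl vr) w) (vee vl (over vr w))"
  unfolding vee_over_eq over_def[of "vee vl vr"] by (rule vle_append_map) simp

lemma vee_under_vle_under: "vle (vee (under v wl) wr) (under v (vee wl wr))"
  unfolding vee_under_eq
  by (rule vle_list_update_left) (simp_all add: vle_def under_def nth_append nth_vee)

lemma not_vle_vee_over_vee_under:
  "\<not> vle (vee vl (over vr (vee wl wr))) (vee (under (vee vl vr) wl) wr)"
proof
  let ?r = "length (vee vl vr) + length wl"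
  assume "vle (vee vl (over vr (vee wl wr))) (vee (under (vee vl vr) wl) wr)"
  then have "vee vl (over vr (vee wl wr)) ! ?r \<le> vee (under (vee vl vr) wl) wr ! ?r"
    by (rule vle_nth) simp
  then show False
    by (simp add: vee_over_eq vee_under_eq nth_append nth_vee under_def)
qed

lemma vle_vee_over_or_vle_vee_under:
  assumes u: "nested u" "length u = length v + length w"
    and v: "v = vee vl vr" and w: "w = vee wl wr" "nested wr"
    and lo: "vle (over v w) u" and hi: "vle u (under v w)"
  shows "vle (vee vl (over vr w)) u \<or> vle u (vee (under v wl) wr)"
proof -
  define n p r where "n = length v" and "p = length vl" and "r = n + length wl"
  have "p < n" "n \<le> r" "r < length u"
    using u(2) v w(1) by (simp_all add: n_def p_def r_def)
  have over: "over v w = v @ map (\<lambda>a. if a = 1 then 1 else a + n) w"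
    by (simp add: over_def n_def)
  have vee_over: "vee vl (over vr w) = v @ map (\<lambda>a. if a = 1 then p + 2 else a + n) w"
    by (simp add: vee_over_eq v n_def p_def)
  have "over v w ! p = 1" "under v w ! p = 1"
    using \<open>p < n\<close> v by (simp_all add: over_def under_def nth_append n_def p_def nth_vee)
  then have u_p: "u ! p = 1"
    using vle_nth[OF lo, of p] vle_nth[OF hi, of p] \<open>p < n\<close> u(2) by (simp add: over_def n_def)
  have "under v w ! r = n + 1"
    using w(1) by (simp add: under_def nth_append n_def r_def nth_vee)
  then have u_r: "u ! r \<le> n + 1"
    using vle_nth[OF hi \<open>r < length u\<close>] by simp
  show ?thesis
  proof (cases "u ! r = 1")
    case True
    then have "vle u (vee (under v wl) wr)"
      using hi by (simp add: vee_under_eq vle_list_update_right flip: w(1) n_def r_def)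
    then show ?thesis ..
  next
    case False
    have above_root: "p + 2 \<le> u ! i" if "n \<le> i" "i \<le> r" for i
    proof (rule ccontr)
      assume "\<not> p + 2 \<le> u ! i"
      then have "u ! i = 1"
        using nested_eq_one[OF u(1), of p i] u_p \<open>p < n\<close> \<open>r < length u\<close> that by simp
      moreover have "i \<noteq> r" using False \<open>u ! i = 1\<close> by auto
      ultimately have "u ! r = 1"
        using nested_eq_one[OF u(1), of i r] u_r \<open>r < length u\<close> that by simp
      with False show False ..
    qed
    have "vee vl (over vr w) ! i \<le> u ! i" if "i < length u" for i
    proof (cases "n \<le> i \<and> w ! (i - n) = 1")
      case True
      have "i - n < length w" using True that u(2) by (auto simp: n_def)
      then have "i - n \<le> length wl"
        using nth_vee_eq_one[OF w(2), of "i - n" wl] True w(1) by auto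
      moreover have "vee vl (over vr w) ! i = p + 2"
        using True \<open>i - n < length w\<close> by (simp add: vee_over nth_append n_def)
      ultimately show ?thesis
        using True above_root[of i] by (simp add: r_def)
    next
      case False
      then have "vee vl (over vr w) ! i = over v w ! i"
        using that u(2) by (auto simp: vee_over over nth_append n_def)
      then show ?thesis using lo that by (simp add: vle_def)
    qed
    then show ?thesis
      using u(2) v by (simp add: vle_def over_def)
  qed
qed

theorem mainTheorem11:
  fixes v w vl vr wl wr :: "nat list" and n m p q p' q' :: nat
  assumes "n \<ge> 1" and "m \<ge> 1"
    and "v \<in> Nhat n" and "w \<in> Nhat m"
    and "vl \<in> Nhat p" and "vr \<in> Nhat q" and "v = vee vl vr"
    and "wl \<in> Nhat p'" and "wr \<in> Nhat q'" and "w = vee wl wr"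
  shows "{u \<in> Nhat (n + m). vle (over v w) u \<and> vle u (under v w)}
           = {u \<in> Nhat (n + m). vle (vee vl (over vr w)) u \<and> vle u (under v w)}
             \<union> {u \<in> Nhat (n + m). vle (over v w) u \<and> vle u (vee (under v wl) wr)}
     \<and> {u \<in> Nhat (n + m). vle (vee vl (over vr w)) u \<and> vle u (under v w)}
       \<inter> {u \<in> Nhat (n + m). vle (over v w) u \<and> vle u (vee (under v wl) wr)} = {}"
proof -
  have length_u: "length u = length v + length w" if "u \<in> Nhat (n + m)" for u
    using Nhat_D(1) that assms(3,4) by simp
  have split: "vle (vee vl (over vr w)) u \<or> vle u (vee (under v wl) wr)"
    if "u \<in> Nhat (n + m)" "vle (over v w) u" "vle u (under v w)" for u
    using vle_vee_over_or_vle_vee_under[OF Nhat_D(2) length_u assms(7,10) Nhat_D(2)] that assms(9) by blast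
  have "vle (over v w) (vee vl (over vr w))" "vle (vee (under v wl) wr) (under v w)"
    using over_vle_vee_over vee_under_vle_under by (simp_all add: assms(7,10))
  moreover have "\<not> vle (vee vl (over vr w)) (vee (under v wl) wr)"
    using not_vle_vee_over_vee_under by (simp add: assms(7,10))
  ultimately show ?thesis
    using split by (blast intro: vle_trans)
qed

end
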